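(* Let $0<q<1$, $m\in\{0,1,2,\dots\}$ and $0<\lambda<q^m(1-q)^{-1}$. Let $X\sim\mathscr{P}(\lambda;q,m)$ (defined in the context) and consider the random variable $[X]_q=\frac{1-q^X}{1-q}$ (the $q$-deformed number operator $[N]_q$ measured in the generalized coherent state). Then \[ \langle [N]_q\rangle:=\sum_{j\ge0}[j]_q\,p_j(\lambda;q,m)=\lambda+[m]_q, \] \[ \langle([N]_q-\langle[N]_q\rangle)^2\rangle:=\sum_{j\ge0}\big([j]_q-\langle[N]_q\rangle\big)^2p_j(\lambda;q,m)=\lambda^2q^m(1+q-2q^{-m})+\lambda q^m\big(2[m]_q+q^m\big). \]
   Context: The $q$-number is $[a]_q=(1-q^a)/(1-q)$. For $a\in\mathbb{C}$: $(a;q)_0=1$, $(a;q)_n=\prod_{k=0}^{n-1}(1-aq^k)$, $(a;q)_\infty=\prod_{k\ge0}(1-aq^k)$. The Wall polynomial is $P_n(x;a|q)=\sum_{k=0}^n\frac{(q^{-n};q)_k}{(aq;q)_k}\frac{(qx)^k}{(q;q)_k}$. Write $m\wedge j=\min(m,j)$, $m\vee j=\max(m,j)$, $\binom{n}{2}=n(n-1)/2$. For $0<\lambda<q^m/(1-q)$ set $\mathcal{N}_{q,m}(\lambda)=\frac{(q^{1-m}(1-q)\lambda;q)_m}{q^m\,(q^{-m}(1-q)\lambda;q)_\infty}$ and \[ p_j(\lambda;q,m)=\frac{q^{2\binom{m\wedge j}{2}}(1-q)^{|m-j|}\lambda^{|m-j|}}{\mathcal{N}_{q,m}(\lambda)\,q^{mj}(q;q)_j(q;q)_m}\left(\frac{(q;q)_{m\vee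 j}}{(q;q)_{|m-j|}}P_{m\wedge j}\big((1-q)\lambda;q^{|m-j|}\,|\,q\big)\right)^2,\quad j=0,1,2,\dots, \] the probability mass function of the generalized Euler distribution $\mathscr{P}(\lambda;q,m)$ (with $\lambda=z\bar z$). *)

theory Defs
  imports "HOL-Analysis.Analysis"
begin

definition qnum :: "real \<Rightarrow> nat \<Rightarrow> real" where
  "qnum q a = (1 - q ^ a) / (1 - q)"

definition qpoch :: "real \<Rightarrow> real \<Rightarrow> nat \<Rightarrow> real" where
  "qpoch a q n = (\<Prod>k<n. 1 - a * q ^ k)"

definition qpoch_inf :: "real \<Rightarrow> real \<Rightarrow> real" where
  "qpoch_inf a q = (\<Prod>k. 1 - a * q ^ k)"

definition wall_poly :: "nat \<Rightarrow> real \<Rightarrow> real \<Rightarrow> real \<Rightarrow> real" where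
  "wall_poly n x a q =
     (\<Sum>k\<le>n. qpoch (inverse (q ^ n)) q k / qpoch (a * q) q k * (q * x) ^ k / qpoch q q k)"

definition gen_euler_norm :: "real \<Rightarrow> nat \<Rightarrow> real \<Rightarrow> real" where
  "gen_euler_norm q m lam =
     qpoch (q * inverse (q ^ m) * (1 - q) * lam) q m /
       (q ^ m * qpoch_inf (inverse (q ^ m) * (1 - q) * lam) q)"

definition gen_euler_pmf :: "real \<Rightarrow> nat \<Rightarrow> real \<Rightarrow> nat \<Rightarrow> real" where
  "gen_euler_pmf q m lam j =
     (let d = max m j - min m j in
       q ^ (2 * (min m j * (min m j - 1) div 2)) * (1 - q) ^ d * lam ^ d /
         (gen_euler_norm q m lam * q ^ (m * j) * qpoch q q j * qpoch q q m) *
       (qpoch q q (max m j) / qpoch q q d * wall_poly (min m j) ((1 - q) * lam) (q ^ d) q)\<^sup>2)"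

end

theory Submission
  imports Defs
begin

text \<open>
  Put \<open>x = (1 - q) \<lambda>\<close> and \<open>y = x / q^m\<close>. Up to a constant factor, \<open>p\<^sub>j\<close> is
  \<open>y^j / (q;q)\<^sub>j \<cdot> F\<^sub>j(m)\<^sup>2\<close>, where the Wall polynomial has been rewritten as the
  q-Charlier-type polynomial \<open>F\<^sub>j(m) = qcharlier q x j m\<close>, which is symmetric in \<open>j\<close> and \<open>m\<close>.
  As \<open>[j]\<^sub>q\<close> is affine in \<open>q^j\<close>, both moments are linear combinations of the sums
  \<open>M\<^sub>m(t) = \<Sum>\<^sub>j t^j / (q;q)\<^sub>j \<cdot> F\<^sub>j(m)\<^sup>2\<close> at \<open>t = y, q y, q\<^sup>2 y\<close>.
  The three-term recurrence of \<open>F\<close> in \<open>j\<close> and its contiguous relations in \<open>j\<close> and \<open>m\<close>,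
  together with the index shift \<open>j \<mapsto> j + 1\<close> (which absorbs a factor \<open>1 - q^j\<close> into the
  weight), give linear relations between these sums for \<open>m\<close> and \<open>m + 1\<close>. They are solved in
  closed form by induction on \<open>m\<close>; at \<open>m = 0\<close> the sums are values of the q-exponential
  \<open>e\<^sub>q(t) = 1 / (t;q)\<^sub>\<infinity>\<close>, which also evaluates the normalising constant.
\<close>

section \<open>q-Pochhammer symbols and q-falling factorials\<close>

fun tri :: "nat \<Rightarrow> nat" where
  "tri 0 = 0"
| "tri (Suc n) = tri n + n"

lemma tri_double: "2 * tri n + n = n * n"
  by (induction n) (auto simp: algebra_simps)

lemma tri_eq: "tri n = n * (n - 1) div 2"
proof -
  have "2 * tri n = n * (n - 1)"
    using tri_double[of n] by (cases n) (auto simp: algebra_simps)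
  then show ?thesis by simp
qed

lemma tri_add: "tri (k + r) = tri k + tri r + k * r"
  by (induction r) (auto simp: algebra_simps)

lemma tri_add_same: "tri k + k + tri (k + r) = tri r + (k + r) * k"
  using tri_add[of k r] tri_double[of k] by (simp add: algebra_simps)

lemma qpoch_0 [simp]: "qpoch a q 0 = 1"
  by (simp add: qpoch_def)

lemma qpoch_Suc: "qpoch a q (Suc n) = qpoch a q n * (1 - a * q ^ n)"
  by (simp add: qpoch_def)

lemma qpoch_Suc_q: "qpoch q q (Suc n) = qpoch q q n * (1 - q ^ Suc n)"
  by (simp add: qpoch_def)

lemma qpoch_mult_q: "qpoch (q * a) q n * (1 - a) = qpoch a q n * (1 - a * q ^ n)"
proof (induction n)
  case (Suc n)
  have "qpoch (q * a) q (Suc n) * (1 - a) = qpoch (q * a) q n * (1 - a) * (1 - q * a * q ^ n)"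
    by (simp add: qpoch_Suc algebra_simps)
  also have "\<dots> = qpoch a q (Suc n) * (1 - a * q ^ Suc n)"
    unfolding Suc qpoch_Suc by (simp add: algebra_simps)
  finally show ?case .
qed simp

lemma qpoch_add: "qpoch q q s * qpoch (q ^ s * q) q k = qpoch q q (s + k)"
  by (induction k) (simp_all add: qpoch_Suc qpoch_Suc_q power_add algebra_simps)

definition qfalling :: "real \<Rightarrow> nat \<Rightarrow> nat \<Rightarrow> real" where
  "qfalling q j b = (\<Prod>i<b. 1 - q ^ j / q ^ i)"

lemma qfalling_0 [simp]: "qfalling q j 0 = 1"
  by (simp add: qfalling_def)

lemma qfalling_Suc: "qfalling q j (Suc b) = qfalling q j b * (1 - q ^ j / q ^ b)"
  by (simp add: qfalling_def)

lemma qfalling_Suc_Suc: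
  assumes "q \<noteq> 0"
  shows "qfalling q (Suc j) (Suc b) = (1 - q ^ Suc j) * qfalling q j b"
  unfolding qfalling_def prod.lessThan_Suc_shift using assms by simp

lemma qfalling_eq_0:
  assumes "q \<noteq> 0" "j < b"
  shows "qfalling q j b = 0"
  unfolding qfalling_def using assms by (intro prod_zero) (auto intro!: bexI[of _ j])

lemma qpoch_inverse_power:
  assumes "q \<noteq> 0"
  shows "qpoch (inverse (q ^ n)) q k = (-1) ^ k * q ^ tri k / q ^ (n * k) * qfalling q n k"
proof (induction k)
  case (Suc k)
  have "1 - inverse (q ^ n) * q ^ k = - (q ^ k / q ^ n) * (1 - q ^ n / q ^ k)"
    using assms by (simp add: field_simps)
  then show ?case
    unfolding qpoch_Suc Suc qfalling_Suc using assms by (simp add: power_add field_simps)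
qed simp

locale q_base =
  fixes q :: real
  assumes q_pos: "0 < q" and q_less_1: "q < 1"
begin

lemma q_nonzero [simp]: "q \<noteq> 0"
  using q_pos by simp

lemma q_power_pos [simp]: "0 < q ^ n"
  using q_pos by simp

lemma q_power_nonneg [simp]: "0 \<le> q ^ n"
  using q_pos by simp

lemma q_power_le_1: "q ^ n \<le> 1"
  using q_pos q_less_1 by (simp add: power_le_one)

lemma q_power_Suc_less_1: "q ^ Suc n < 1"
  using q_pos q_less_1 by (rule power_Suc_less_one)

lemma q_times_q_power_neq_1 [simp]: "q * q ^ n \<noteq> 1"
  using q_power_Suc_less_1[of n] by simp

lemma two_minus_q_power_pos: "0 < 2 - (1 + q) * q ^ n"
proof -
  have "(1 + q) * q ^ n \<le> 1 + q"
    using q_pos q_power_le_1 by (simp add: mult_left_le)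
  then show ?thesis
    using q_less_1 by linarith
qed

lemma less_q_power_Suc_imp_less: "t < q ^ Suc n \<Longrightarrow> t < q ^ n"
  using power_decreasing[of n "Suc n" q] q_pos q_less_1 by linarith

lemma abs_q_mult_less_1: "\<bar>t\<bar> < 1 \<Longrightarrow> \<bar>q * t\<bar> < 1"
  using q_pos q_less_1 by (simp add: abs_mult) (smt (verit) mult_left_le_one_le abs_ge_zero)

lemma qpoch_pos:
  assumes "0 \<le> a" "a < 1"
  shows "0 < qpoch a q n"
  unfolding qpoch_def
proof (rule prod_pos)
  fix k
  have "a * q ^ k \<le> a"
    using assms q_power_le_1[of k] by (simp add: mult_left_le)
  then show "0 < 1 - a * q ^ k" using assms by simp
qed

lemma qpoch_q_pos [simp]: "0 < qpoch q q n"
  using qpoch_pos q_pos q_less_1 by simp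

lemma qpoch_q_nonzero [simp]: "qpoch q q n \<noteq> 0"
  using qpoch_q_pos[of n] by linarith

lemma abs_qfalling_le_1: "\<bar>qfalling q j b\<bar> \<le> 1"
proof (induction b)
  case (Suc b)
  show ?case
  proof (cases "b < j")
    case True
    have "q ^ j \<le> q ^ b" using True q_pos q_less_1 by (intro power_decreasing) auto
    then have "q ^ j / q ^ b \<le> 1" "0 \<le> q ^ j / q ^ b" using q_pos by simp_all
    then have "\<bar>1 - q ^ j / q ^ b\<bar> \<le> 1" by linarith
    then show ?thesis
      using Suc by (simp add: qfalling_Suc abs_mult mult_le_one)
  next
    case False
    then show ?thesis by (simp add: qfalling_eq_0)
  qed
qed simp

lemma qfalling_mult_qpoch:
  assumes "b \<le> M"
  shows "qfalling q M b * qpoch q q (M - b) = qpoch q q M"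
  using assms
proof (induction b arbitrary: M)
  case (Suc b)
  then obtain M' where M: "M = Suc M'" "b \<le> M'" by (cases M) auto
  then show ?case
    using Suc.IH[OF M(2)] by (simp add: qfalling_Suc_Suc qpoch_Suc_q)
qed simp

lemma qfalling_div_qpoch_symmetric:
  assumes "k \<le> n"
  shows "qfalling q n k / qpoch q q k = qfalling q n (n - k) / qpoch q q (n - k)"
  using qfalling_mult_qpoch[of k n] qfalling_mult_qpoch[of "n - k" n] assms
  by (simp add: field_simps)

end

section \<open>Series weighted by the q-exponential\<close>

lemma Bseq_plus [simp]: "Bseq f \<Longrightarrow> Bseq g \<Longrightarrow> Bseq (\<lambda>j. f j + g j)"
  for f g :: "nat \<Rightarrow> 'a::real_normed_vector"
proof -
  assume "Bseq f" "Bseq g"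
  then obtain A B where "\<And>j. norm (f j) \<le> A" "\<And>j. norm (g j) \<le> B"
    by (auto elim!: BseqE)
  then have "norm (f j + g j) \<le> A + B" for j
    by (intro norm_triangle_le add_mono)
  then show ?thesis
    by (rule BseqI')
qed

lemma Bseq_diff [simp]: "Bseq f \<Longrightarrow> Bseq g \<Longrightarrow> Bseq (\<lambda>j. f j - g j)"
  for f g :: "nat \<Rightarrow> 'a::real_normed_vector"
  using Bseq_plus[of f "\<lambda>j. - g j"] by (simp add: Bseq_minus_iff)

declare Bseq_mult [simp]

lemma Bseq_power [simp]: "Bseq f \<Longrightarrow> Bseq (\<lambda>j. f j ^ n)"
  for f :: "nat \<Rightarrow> 'a::real_normed_field"
  by (induction n) simp_all

definition qexp_weight :: "real \<Rightarrow> real \<Rightarrow> nat \<Rightarrow> real" where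
  "qexp_weight q t j = t ^ j / qpoch q q j"

definition qexp_wsum :: "real \<Rightarrow> real \<Rightarrow> (nat \<Rightarrow> real) \<Rightarrow> real" where
  "qexp_wsum q t f = (\<Sum>j. qexp_weight q t j * f j)"

definition qexp :: "real \<Rightarrow> real \<Rightarrow> real" where
  "qexp q t = qexp_wsum q t (\<lambda>_. 1)"

lemma qexp_wsum_power_mult: "qexp_wsum q t (\<lambda>j. a ^ j * f j) = qexp_wsum q (a * t) f"
  unfolding qexp_wsum_def qexp_weight_def by (simp add: power_mult_distrib field_simps)

context q_base
begin

lemma Bseq_q_power [simp]: "Bseq (\<lambda>j. q ^ j)"
  using q_pos q_less_1 by (intro Bseq_realpow) auto

lemma qexp_weight_Suc: "qexp_weight q t (Suc j) = t / (1 - q ^ Suc j) * qexp_weight q t j"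
  unfolding qexp_weight_def qpoch_Suc_q by simp

lemma abs_qexp_weight: "\<bar>qexp_weight q t j\<bar> = qexp_weight q \<bar>t\<bar> j"
  unfolding qexp_weight_def by (simp add: abs_divide power_abs abs_of_pos)

lemma qexp_weight_nonneg: "0 \<le> t \<Longrightarrow> 0 \<le> qexp_weight q t j"
  unfolding qexp_weight_def by (simp add: less_imp_le)

lemma summable_qexp_weight:
  assumes "0 \<le> t" "t < 1"
  shows "summable (qexp_weight q t)"
proof -
  obtain N where "q ^ N < 1 - t"
    using real_arch_pow_inv[of "1 - t" q] assms q_less_1 by auto
  moreover have "q ^ Suc N \<le> q ^ N"
    using q_pos q_less_1 by (intro power_decreasing) auto
  ultimately have N: "q ^ Suc N < 1 - t"
    by linarith
  show ?thesis
  proof (rule summable_ratio_test[of "t / (1 - q ^ Suc N)" N])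
    show "t / (1 - q ^ Suc N) < 1"
      using N assms by (simp add: divide_less_eq_1 del: power_Suc)
  next
    fix n
    assume "N \<le> n"
    then have "q ^ Suc n \<le> q ^ Suc N"
      using q_pos q_less_1 by (intro power_decreasing) auto
    then have "t / (1 - q ^ Suc n) \<le> t / (1 - q ^ Suc N)"
      using N assms by (intro divide_left_mono) auto
    then have "t / (1 - q ^ Suc n) * qexp_weight q t n \<le> t / (1 - q ^ Suc N) * qexp_weight q t n"
      using qexp_weight_nonneg[OF assms(1)] by (rule mult_right_mono)
    then have "qexp_weight q t (Suc n) \<le> t / (1 - q ^ Suc N) * qexp_weight q t n"
      unfolding qexp_weight_Suc[of t n] .
    then show "norm (qexp_weight q t (Suc n)) \<le> t / (1 - q ^ Suc N) * norm (qexp_weight q t n)"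
      using qexp_weight_nonneg[OF assms(1)] by (simp add: abs_of_nonneg)
  qed
qed

lemma summable_qexp_weight_mult:
  assumes "Bseq f" "\<bar>t\<bar> < 1"
  shows "summable (\<lambda>j. qexp_weight q t j * f j)"
proof -
  obtain K where K: "\<And>j. \<bar>f j\<bar> \<le> K"
    using assms(1) by (auto simp: Bseq_def)
  show ?thesis
  proof (rule summable_comparison_test')
    show "summable (\<lambda>j. K * qexp_weight q \<bar>t\<bar> j)"
      using summable_qexp_weight[of "\<bar>t\<bar>"] assms(2) by (intro summable_mult) auto
    show "norm (qexp_weight q t j * f j) \<le> K * qexp_weight q \<bar>t\<bar> j" for j
      using mult_right_mono[OF K[of j] qexp_weight_nonneg[of "\<bar>t\<bar>" j]]
      by (simp add: abs_mult abs_qexp_weight mult.commute)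
  qed
qed

lemma qexp_wsum_sums:
  "Bseq f \<Longrightarrow> \<bar>t\<bar> < 1 \<Longrightarrow> (\<lambda>j. qexp_weight q t j * f j) sums qexp_wsum q t f"
  unfolding qexp_wsum_def by (intro summable_sums summable_qexp_weight_mult)

lemma qexp_wsum_add:
  "Bseq f \<Longrightarrow> Bseq g \<Longrightarrow> \<bar>t\<bar> < 1 \<Longrightarrow>
    qexp_wsum q t (\<lambda>j. f j + g j) = qexp_wsum q t f + qexp_wsum q t g"
  unfolding qexp_wsum_def distrib_left
  by (intro suminf_add[symmetric] summable_qexp_weight_mult)

lemma qexp_wsum_diff:
  "Bseq f \<Longrightarrow> Bseq g \<Longrightarrow> \<bar>t\<bar> < 1 \<Longrightarrow>
    qexp_wsum q t (\<lambda>j. f j - g j) = qexp_wsum q t f - qexp_wsum q t g"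
  unfolding qexp_wsum_def right_diff_distrib
  by (intro suminf_diff[symmetric] summable_qexp_weight_mult)

lemma qexp_wsum_cmult:
  "Bseq f \<Longrightarrow> \<bar>t\<bar> < 1 \<Longrightarrow> qexp_wsum q t (\<lambda>j. c * f j) = c * qexp_wsum q t f"
  unfolding qexp_wsum_def using suminf_mult[OF summable_qexp_weight_mult, of f t c]
  by (simp add: ac_simps)

lemma qexp_wsum_shift:
  assumes "Bseq h" "\<bar>t\<bar> < 1"
  shows "qexp_wsum q t (\<lambda>j. (1 - q ^ j) * h j) = t * qexp_wsum q t (\<lambda>j. h (Suc j))"
proof -
  have step: "qexp_weight q t (Suc j) * ((1 - q ^ Suc j) * h (Suc j)) = t * (qexp_weight q t j * h (Suc j))"
    for j by (simp add: qexp_weight_Suc)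
  have "(\<lambda>j. t * (qexp_weight q t j * h (Suc j))) sums (t * qexp_wsum q t (\<lambda>j. h (Suc j)))"
    using assms by (intro sums_mult qexp_wsum_sums) (simp_all add: Bseq_Suc_iff)
  then have "(\<lambda>j. qexp_weight q t (Suc j) * ((1 - q ^ Suc j) * h (Suc j)))
      sums (t * qexp_wsum q t (\<lambda>j. h (Suc j)))"
    by (simp only: step)
  then have "(\<lambda>j. qexp_weight q t j * ((1 - q ^ j) * h j)) sums (t * qexp_wsum q t (\<lambda>j. h (Suc j)))"
    using sums_Suc_iff[of "\<lambda>j. qexp_weight q t j * ((1 - q ^ j) * h j)"] by simp
  then show ?thesis
    unfolding qexp_wsum_def by (rule sums_unique[symmetric])
qed

lemma qexp_q_mult:
  assumes "\<bar>t\<bar> < 1"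
  shows "qexp q (q * t) = (1 - t) * qexp q t"
proof -
  have "qexp q (q * t) = qexp_wsum q t (\<lambda>j. q ^ j)"
    using qexp_wsum_power_mult[of q t q "\<lambda>_. 1"] by (simp add: qexp_def)
  also have "\<dots> = qexp q t - qexp_wsum q t (\<lambda>j. (1 - q ^ j) * 1)"
    using qexp_wsum_diff[of "\<lambda>_. 1" "\<lambda>j. 1 - q ^ j" t] assms by (simp add: qexp_def)
  also have "qexp_wsum q t (\<lambda>j. (1 - q ^ j) * 1) = t * qexp q t"
    using qexp_wsum_shift[of "\<lambda>_. 1" t] assms by (simp add: qexp_def)
  finally show ?thesis
    by (simp add: algebra_simps)
qed

lemma qexp_q_power_mult:
  assumes "\<bar>t\<bar> < 1"
  shows "qexp q (q ^ n * t) = qpoch t q n * qexp q t"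
proof (induction n)
  case (Suc n)
  have "\<bar>q ^ n * t\<bar> \<le> \<bar>t\<bar>"
    using mult_left_le_one_le[OF abs_ge_zero[of t] q_power_nonneg q_power_le_1[of n]]
    by (simp add: abs_mult abs_of_pos)
  then have "qexp q (q * (q ^ n * t)) = (1 - q ^ n * t) * qexp q (q ^ n * t)"
    using assms by (intro qexp_q_mult) simp
  then show ?case
    using Suc by (simp add: qpoch_Suc algebra_simps)
qed simp

lemma qexp_ge_1:
  assumes "0 \<le> t" "t < 1"
  shows "1 \<le> qexp q t"
proof -
  have "(\<Sum>j<1. qexp_weight q t j * 1) \<le> (\<Sum>j. qexp_weight q t j * 1)"
    using summable_qexp_weight[of t] qexp_weight_nonneg[of t] assms
    by (intro sum_le_suminf) auto
  then show ?thesis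
    by (simp add: qexp_def qexp_wsum_def qexp_weight_def)
qed

lemma qexp_q_power_mult_tendsto_1: "(\<lambda>n. qexp q (q ^ n * t)) \<longlonglongrightarrow> 1"
proof -
  have qexp_powser: "qexp q s = (\<Sum>j. inverse (qpoch q q j) * s ^ j)" for s
    unfolding qexp_def qexp_wsum_def qexp_weight_def by (simp only: divide_inverse_commute mult_1_right)
  have "summable (\<lambda>j. inverse (qpoch q q j) * (1 / 2) ^ j)"
    using summable_qexp_weight[of "1 / 2"] unfolding qexp_weight_def divide_inverse_commute by simp
  then have "isCont (qexp q) 0"
    unfolding qexp_powser[abs_def] by (rule isCont_powser) simp
  moreover have "(\<lambda>n. q ^ n * t) \<longlonglongrightarrow> 0"
    using q_pos q_less_1 by (intro tendsto_mult_left_zero LIMSEQ_power_zero) auto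
  ultimately have "(\<lambda>n. qexp q (q ^ n * t)) \<longlonglongrightarrow> qexp q 0"
    by (rule isCont_tendsto_compose)
  moreover have "qexp q 0 = 1"
    using powser_zero[of "\<lambda>j. inverse (qpoch q q j)"] by (simp add: qexp_powser)
  ultimately show ?thesis
    by simp
qed

lemma qpoch_inf_eq_inverse_qexp:
  assumes "0 \<le> t" "t < 1"
  shows "qpoch_inf t q = 1 / qexp q t"
proof -
  have pos: "0 < qexp q t"
    using qexp_ge_1[OF assms] by simp
  have "(\<lambda>n. qexp q (q ^ n * t) / qexp q t) \<longlonglongrightarrow> 1 / qexp q t"
    using pos by (intro tendsto_divide qexp_q_power_mult_tendsto_1 tendsto_const) simp
  moreover have "qexp q (q ^ n * t) / qexp q t = (\<Prod>k<n. 1 - t * q ^ k)" for n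
    using qexp_q_power_mult[of t n] assms pos by (simp add: qpoch_def)
  ultimately have "(\<lambda>n. \<Prod>k<n. 1 - t * q ^ k) \<longlonglongrightarrow> 1 / qexp q t"
    by simp
  then show ?thesis
    unfolding qpoch_inf_def by (rule prodinf_eq_prod_lim') (use pos in simp)
qed

end

section \<open>q-Charlier polynomials\<close>

definition qcharlier_term :: "real \<Rightarrow> real \<Rightarrow> nat \<Rightarrow> nat \<Rightarrow> nat \<Rightarrow> real" where
  "qcharlier_term q x j m b =
     qfalling q j b * qfalling q m b / qpoch q q b * (-1) ^ b * q ^ tri b / x ^ b"

definition qcharlier :: "real \<Rightarrow> real \<Rightarrow> nat \<Rightarrow> nat \<Rightarrow> real" where
  "qcharlier q x j m = (\<Sum>b\<le>m. qcharlier_term q x j m b)"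

lemma qcharlier_term_0 [simp]: "qcharlier_term q x j m 0 = 1"
  by (simp add: qcharlier_term_def)

lemma qcharlier_term_commute: "qcharlier_term q x j m b = qcharlier_term q x m j b"
  by (simp add: qcharlier_term_def)

lemma qcharlier_0_right [simp]: "qcharlier q x j 0 = 1"
  by (simp add: qcharlier_def)

locale q_charlier = q_base +
  fixes x :: real
  assumes x_pos: "0 < x"
begin

lemma x_nonzero [simp]: "x \<noteq> 0"
  using x_pos by simp

lemma qcharlier_eq_sum_atMost:
  assumes "m \<le> n"
  shows "qcharlier q x j m = (\<Sum>b\<le>n. qcharlier_term q x j m b)"
  unfolding qcharlier_def
  by (rule sum.mono_neutral_left) (use assms in \<open>auto simp: qcharlier_term_def qfalling_eq_0\<close>)

lemma qcharlier_commute: "qcharlier q x j m = qcharlier q x m j"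
  using qcharlier_eq_sum_atMost[of m "j + m" j] qcharlier_eq_sum_atMost[of j "j + m" m]
  by (simp add: qcharlier_term_commute)

lemma qcharlier_0_left [simp]: "qcharlier q x 0 m = 1"
  using qcharlier_commute[of 0 m] by simp

lemma qcharlier_term_diff:
  "qcharlier_term q x j (Suc n) (Suc b) - qcharlier_term q x (Suc j) (Suc n) (Suc b) =
     q ^ j * (1 - q ^ Suc n) / x * qcharlier_term q x j n b"
proof -
  define c where "c = (1 - q ^ Suc n) * qfalling q j b * qfalling q n b /
      (qpoch q q b * (1 - q ^ Suc b)) * (-1) ^ Suc b * q ^ tri b * q ^ b / x ^ Suc b"
  have "qcharlier_term q x j (Suc n) (Suc b) = (1 - q ^ j / q ^ b) * c"
    by (simp add: c_def qcharlier_term_def qfalling_Suc[of q j] qfalling_Suc_Suc qpoch_Suc_q power_add)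
  moreover have "qcharlier_term q x (Suc j) (Suc n) (Suc b) = (1 - q ^ Suc j) * c"
    by (simp add: c_def qcharlier_term_def qfalling_Suc_Suc qpoch_Suc_q power_add)
  moreover have "(1 - q ^ j / q ^ b) - (1 - q ^ Suc j) = - (q ^ j / q ^ b) * (1 - q ^ Suc b)"
    by (simp add: field_simps)
  moreover have "- (q ^ j / q ^ b) * (1 - q ^ Suc b) * c = q ^ j * (1 - q ^ Suc n) / x * qcharlier_term q x j n b"
    unfolding c_def qcharlier_term_def by (simp add: field_simps)
  ultimately show ?thesis
    by (metis left_diff_distrib)
qed

lemma qcharlier_diff_Suc_left:
  "qcharlier q x j (Suc n) - qcharlier q x (Suc j) (Suc n) =
     q ^ j * (1 - q ^ Suc n) / x * qcharlier q x j n"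
proof -
  have "qcharlier q x j (Suc n) - qcharlier q x (Suc j) (Suc n) =
      (\<Sum>b\<le>n. qcharlier_term q x j (Suc n) (Suc b) - qcharlier_term q x (Suc j) (Suc n) (Suc b))"
    unfolding qcharlier_def sum.atMost_Suc_shift by (simp add: sum_subtractf)
  then show ?thesis
    by (simp add: qcharlier_term_diff qcharlier_def sum_distrib_left)
qed

lemma qcharlier_diff_Suc_right:
  "qcharlier q x j n - qcharlier q x j (Suc n) = q ^ n * (1 - q ^ j) / x * qcharlier q x (j - 1) n"
proof (cases j)
  case (Suc i)
  then show ?thesis
    using qcharlier_diff_Suc_left[of n i] by (simp add: qcharlier_commute)
qed simp

lemma qcharlier_recurrence:
  "x * qcharlier q x (Suc j) m =
     (q ^ m + x - q ^ j) * qcharlier q x j m - (1 - q ^ j) * q ^ m * qcharlier q x (j - 1) m"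
proof -
  consider "m = 0" | n where "m = Suc n" "j = 0" | n i where "m = Suc n" "j = Suc i"
    by (cases m; cases j) auto
  then show ?thesis
  proof cases
    case 2
    then show ?thesis
      using qcharlier_diff_Suc_left[of 0 n] by (simp add: field_simps)
  next
    case 3
    define Q U where "Q = q ^ Suc n" and "U = q ^ i"
    define F0 F1 F2 where "F0 = qcharlier q x i m" and "F1 = qcharlier q x (Suc i) m"
      and "F2 = qcharlier q x (Suc (Suc i)) m"
    define G0 G1 where "G0 = qcharlier q x i n" and "G1 = qcharlier q x (Suc i) n"
    have "F1 - F2 = q * U * (1 - Q) / x * G1"
      using qcharlier_diff_Suc_left[of "Suc i" n] by (simp add: 3 Q_def U_def F1_def F2_def G1_def)
    then have F2_eq: "x * F2 = x * F1 - q * U * (1 - Q) * G1"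
      by (simp add: field_simps)
    have "G1 - F1 = q ^ n * (1 - q * U) / x * G0"
      using qcharlier_diff_Suc_right[of "Suc i" n] by (simp add: 3 U_def F1_def G0_def G1_def)
    then have G1_eq: "x * G1 = x * F1 + q ^ n * (1 - q * U) * G0"
      by (simp add: field_simps)
    have "F0 - F1 = U * (1 - Q) / x * G0"
      using qcharlier_diff_Suc_left[of i n] by (simp add: 3 Q_def U_def F0_def F1_def G0_def)
    then have G0_eq: "U * (1 - Q) * G0 = x * (F0 - F1)"
      by (simp add: field_simps)
    have "x * (x * F2) = x * x * F1 - q * U * (1 - Q) * (x * G1)"
      using F2_eq by algebra
    also have "\<dots> = x * x * F1 - q * U * (1 - Q) * (x * F1) - Q * (1 - q * U) * (U * (1 - Q) * G0)"
      unfolding G1_eq Q_def power_Suc by algebra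
    also have "\<dots> = x * ((Q + x - q * U) * F1 - (1 - q * U) * Q * F0)"
      unfolding G0_eq by algebra
    finally have "x * F2 = (Q + x - q * U) * F1 - (1 - q * U) * Q * F0"
      by simp
    then show ?thesis
      by (simp add: 3 Q_def U_def F0_def F1_def F2_def)
  qed simp
qed

lemma Bseq_qcharlier [simp]: "Bseq (\<lambda>j. qcharlier q x (g j) m)"
proof (rule BseqI')
  fix j
  have "\<bar>qcharlier_term q x (g j) m b\<bar> \<le> \<bar>q ^ tri b / (qpoch q q b * x ^ b)\<bar>" for b
  proof -
    have "\<bar>qcharlier_term q x (g j) m b\<bar> =
        \<bar>qfalling q (g j) b\<bar> * \<bar>qfalling q m b\<bar> * \<bar>q ^ tri b / (qpoch q q b * x ^ b)\<bar>"
      by (simp add: qcharlier_term_def abs_mult)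
    also have "\<dots> \<le> \<bar>q ^ tri b / (qpoch q q b * x ^ b)\<bar>"
      using abs_qfalling_le_1[of "g j" b] abs_qfalling_le_1[of m b]
      by (intro mult_left_le_one_le mult_le_one) auto
    finally show ?thesis .
  qed
  then show "norm (qcharlier q x (g j) m) \<le> (\<Sum>b\<le>m. \<bar>q ^ tri b / (qpoch q q b * x ^ b)\<bar>)"
    unfolding qcharlier_def real_norm_def by (rule order_trans[OF sum_abs sum_mono])
qed

lemma wall_poly_term_eq_qcharlier_term:
  assumes "k \<le> n" "n \<le> M"
  shows "qpoch q q M / qpoch q q (M - n) *
      (qpoch (inverse (q ^ n)) q k / qpoch (q ^ (M - n) * q) q k * (q * x) ^ k / qpoch q q k) =
    (-1) ^ n * x ^ n / q ^ tri n * qcharlier_term q x M n (n - k)"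
proof -
  obtain r s where r: "n = k + r" and s: "M = n + s"
    using assms le_Suc_ex by blast
  have "qpoch q q s * qpoch (q ^ s * q) q k = qpoch q q (M - r)"
    unfolding qpoch_add using r s by (simp add: add.commute)
  then have falling_M: "qpoch q q M / (qpoch q q s * qpoch (q ^ s * q) q k) = qfalling q M r"
    using qfalling_mult_qpoch[of r M] r s by (simp add: field_simps)
  have falling_n: "qfalling q n k / qpoch q q k = qfalling q n r / qpoch q q r"
    using qfalling_div_qpoch_symmetric[of k n] r by simp
  have sign: "(-1::real) ^ k = (-1) ^ n * (-1) ^ r"
    unfolding r power_add by (simp add: power_mult_distrib[symmetric])
  have q_power: "q ^ tri k * q ^ k / q ^ (n * k) = q ^ tri r / q ^ tri n"
    using tri_add_same[of k r] unfolding r by (simp add: field_simps flip: power_add)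
  have x_power: "x ^ k = x ^ n / x ^ r"
    unfolding r by (simp add: power_add)
  have "qpoch q q M / qpoch q q (M - n) *
      (qpoch (inverse (q ^ n)) q k / qpoch (q ^ (M - n) * q) q k * (q * x) ^ k / qpoch q q k) =
      qpoch q q M / (qpoch q q s * qpoch (q ^ s * q) q k) * (qfalling q n k / qpoch q q k) *
        (-1) ^ k * (q ^ tri k * q ^ k / q ^ (n * k)) * x ^ k"
    unfolding qpoch_inverse_power[OF q_nonzero] using s by (simp add: power_mult_distrib ac_simps)
  also have "\<dots> = qfalling q M r * (qfalling q n r / qpoch q q r) * ((-1) ^ n * (-1) ^ r) *
      (q ^ tri r / q ^ tri n) * (x ^ n / x ^ r)"
    unfolding falling_M falling_n sign q_power x_power ..
  also have "\<dots> = (-1) ^ n * x ^ n / q ^ tri n * qcharlier_term q x M n (n - k)"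
    unfolding qcharlier_term_def using r by (simp add: ac_simps)
  finally show ?thesis .
qed

lemma wall_poly_eq_qcharlier:
  assumes "n \<le> M"
  shows "qpoch q q M / qpoch q q (M - n) * wall_poly n x (q ^ (M - n)) q =
    (-1) ^ n * x ^ n / q ^ tri n * qcharlier q x M n"
proof -
  have "qpoch q q M / qpoch q q (M - n) * wall_poly n x (q ^ (M - n)) q =
      (\<Sum>k\<le>n. (-1) ^ n * x ^ n / q ^ tri n * qcharlier_term q x M n (n - k))"
    unfolding wall_poly_def sum_distrib_left
    using assms by (intro sum.cong refl wall_poly_term_eq_qcharlier_term) auto
  also have "\<dots> = (-1) ^ n * x ^ n / q ^ tri n * (\<Sum>k\<le>n. qcharlier_term q x M n (n - k))"
    by (simp add: sum_distrib_left)
  also have "(\<Sum>k\<le>n. qcharlier_term q x M n (n - k)) = qcharlier q x M n"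
    unfolding qcharlier_def atMost_atLeast0 using sum.atLeastAtMost_rev[of "qcharlier_term q x M n" 0 n] by simp
  finally show ?thesis .
qed

end

section \<open>Weighted square sums of q-Charlier polynomials\<close>

definition qcharlier_moment :: "real \<Rightarrow> real \<Rightarrow> nat \<Rightarrow> real \<Rightarrow> real" where
  "qcharlier_moment q x m t = qexp_wsum q t (\<lambda>j. qcharlier q x j m ^ 2)"

context q_charlier
begin

lemma qcharlier_moment_0 [simp]: "qcharlier_moment q x 0 t = qexp q t"
  by (simp add: qcharlier_moment_def qexp_def)

lemma qcharlier_cross_moment:
  assumes "\<bar>t\<bar> < 1"
  shows "(x + q ^ m * t) * qexp_wsum q t (\<lambda>j. qcharlier q x j m * qcharlier q x (Suc j) m) =
    (q ^ m + x) * qcharlier_moment q x m t - qcharlier_moment q x m (q * t)"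
proof -
  let ?F = "\<lambda>j. qcharlier q x j m"
  let ?P = "qexp_wsum q t (\<lambda>j. ?F j * ?F (Suc j))"
  have rec: "x * (?F j * ?F (Suc j)) =
      (q ^ m + x) * ?F j ^ 2 - q ^ j * ?F j ^ 2 - q ^ m * ((1 - q ^ j) * (?F (j - 1) * ?F j))" for j
  proof -
    have "x * (?F j * ?F (Suc j)) = ?F j * (x * ?F (Suc j))"
      by simp
    then show ?thesis
      unfolding qcharlier_recurrence by (simp add: algebra_simps power2_eq_square)
  qed
  have "x * ?P = qexp_wsum q t (\<lambda>j. x * (?F j * ?F (Suc j)))"
    using assms by (simp add: qexp_wsum_cmult)
  also have "\<dots> = qexp_wsum q t (\<lambda>j. (q ^ m + x) * ?F j ^ 2 - q ^ j * ?F j ^ 2 -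
      q ^ m * ((1 - q ^ j) * (?F (j - 1) * ?F j)))"
    by (simp only: rec)
  also have "\<dots> = (q ^ m + x) * qcharlier_moment q x m t - qcharlier_moment q x m (q * t) - q ^ m * (t * ?P)"
    using assms by (simp add: qexp_wsum_diff qexp_wsum_cmult qexp_wsum_shift
        qexp_wsum_power_mult qcharlier_moment_def)
  finally show ?thesis
    by (simp add: algebra_simps)
qed

lemma qexp_wsum_qcharlier_diff_square:
  assumes "\<bar>t\<bar> < 1"
  shows "qexp_wsum q t (\<lambda>j. (qcharlier q x j (Suc n) - qcharlier q x (Suc j) (Suc n))\<^sup>2) =
    ((1 - q ^ Suc n) / x)\<^sup>2 * qcharlier_moment q x n (q\<^sup>2 * t)"
proof -
  let ?F = "\<lambda>j. qcharlier q x j (Suc n)" and ?G = "\<lambda>j. qcharlier q x j n"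
  have "(\<lambda>j. (?F j - ?F (Suc j))\<^sup>2) = (\<lambda>j. ((1 - q ^ Suc n) / x)\<^sup>2 * (q ^ j * (q ^ j * ?G j ^ 2)))"
    unfolding qcharlier_diff_Suc_left by (simp add: power2_eq_square algebra_simps)
  then have "qexp_wsum q t (\<lambda>j. (?F j - ?F (Suc j))\<^sup>2) =
      ((1 - q ^ Suc n) / x)\<^sup>2 * qexp_wsum q t (\<lambda>j. q ^ j * (q ^ j * ?G j ^ 2))"
    using assms by (simp add: qexp_wsum_cmult)
  then show ?thesis
    by (simp add: qexp_wsum_power_mult qcharlier_moment_def power2_eq_square mult.assoc)
qed

lemma qcharlier_moment_contiguous:
  assumes "\<bar>t\<bar> < 1"
  shows "(1 + t) * qcharlier_moment q x (Suc n) t - qcharlier_moment q x (Suc n) (q * t) -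
      2 * t * qexp_wsum q t (\<lambda>j. qcharlier q x j (Suc n) * qcharlier q x (Suc j) (Suc n)) =
    t * ((1 - q ^ Suc n) / x)\<^sup>2 * qcharlier_moment q x n (q\<^sup>2 * t)"
proof -
  let ?F = "\<lambda>j. qcharlier q x j (Suc n)"
  let ?P = "qexp_wsum q t (\<lambda>j. ?F j * ?F (Suc j))"
  let ?D = "qexp_wsum q t (\<lambda>j. ?F (Suc j) ^ 2)"
  have "qexp_wsum q t (\<lambda>j. (1 - q ^ j) * ?F j ^ 2) = t * ?D"
    using assms by (intro qexp_wsum_shift) simp_all
  moreover have "qexp_wsum q t (\<lambda>j. (1 - q ^ j) * ?F j ^ 2) =
      qcharlier_moment q x (Suc n) t - qcharlier_moment q x (Suc n) (q * t)"
    using assms by (simp add: left_diff_distrib qexp_wsum_diff qexp_wsum_power_mult qcharlier_moment_def)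
  ultimately have shift: "qcharlier_moment q x (Suc n) t - qcharlier_moment q x (Suc n) (q * t) = t * ?D"
    by simp
  have "qexp_wsum q t (\<lambda>j. (?F j - ?F (Suc j))\<^sup>2) =
      qexp_wsum q t (\<lambda>j. ?F (Suc j) ^ 2 - 2 * (?F j * ?F (Suc j)) + ?F j ^ 2)"
    by (intro arg_cong[where f = "qexp_wsum q t"] ext) (simp add: power2_eq_square algebra_simps)
  then have square: "?D - 2 * ?P + qcharlier_moment q x (Suc n) t = qexp_wsum q t (\<lambda>j. (?F j - ?F (Suc j))\<^sup>2)"
    using assms by (simp add: qexp_wsum_add qexp_wsum_diff qexp_wsum_cmult qcharlier_moment_def)
  have "(1 + t) * qcharlier_moment q x (Suc n) t - qcharlier_moment q x (Suc n) (q * t) - 2 * t * ?P =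
      (qcharlier_moment q x (Suc n) t - qcharlier_moment q x (Suc n) (q * t)) +
      t * (qcharlier_moment q x (Suc n) t - 2 * ?P)"
    by (simp add: algebra_simps)
  also have "\<dots> = t * (?D - 2 * ?P + qcharlier_moment q x (Suc n) t)"
    unfolding shift by (simp add: algebra_simps)
  finally show ?thesis
    unfolding square qexp_wsum_qcharlier_diff_square[OF assms] by simp
qed

lemma qcharlier_mixed_moment:
  assumes "\<bar>t\<bar> < 1"
  shows "qexp_wsum q (q * t) (\<lambda>j. qcharlier q x j (Suc n) * qcharlier q x j n) =
    x / (1 - q ^ Suc n) * (qcharlier_moment q x (Suc n) t -
      qexp_wsum q t (\<lambda>j. qcharlier q x j (Suc n) * qcharlier q x (Suc j) (Suc n)))"
proof -
  let ?F = "\<lambda>j. qcharlier q x j (Suc n)" and ?G = "\<lambda>j. qcharlier q x j n"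
  have qG: "q ^ j * ?G j = x / (1 - q ^ Suc n) * (?F j - ?F (Suc j))" for j
    using qcharlier_diff_Suc_left[of j n] by (simp add: field_simps)
  have "(\<lambda>j. q ^ j * (?F j * ?G j)) = (\<lambda>j. x / (1 - q ^ Suc n) * (?F j ^ 2 - ?F j * ?F (Suc j)))"
  proof
    fix j
    have "q ^ j * (?F j * ?G j) = ?F j * (q ^ j * ?G j)"
      by simp
    then show "q ^ j * (?F j * ?G j) = x / (1 - q ^ Suc n) * (?F j ^ 2 - ?F j * ?F (Suc j))"
      unfolding qG by (simp add: power2_eq_square algebra_simps)
  qed
  then have "qexp_wsum q (q * t) (\<lambda>j. ?F j * ?G j) =
      qexp_wsum q t (\<lambda>j. x / (1 - q ^ Suc n) * (?F j ^ 2 - ?F j * ?F (Suc j)))"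
    by (simp flip: qexp_wsum_power_mult)
  also have "\<dots> = x / (1 - q ^ Suc n) * qexp_wsum q t (\<lambda>j. ?F j ^ 2 - ?F j * ?F (Suc j))"
    by (rule qexp_wsum_cmult) (use assms in simp_all)
  finally show ?thesis
    using assms by (simp add: qexp_wsum_diff qcharlier_moment_def)
qed

lemma qcharlier_mixed_moment_square:
  assumes "\<bar>t\<bar> < 1"
  shows "qcharlier_moment q x n (q * t) -
      2 * qexp_wsum q (q * t) (\<lambda>j. qcharlier q x j (Suc n) * qcharlier q x j n) +
      qcharlier_moment q x (Suc n) (q * t) =
    t * q * (q ^ n / x)\<^sup>2 * (qcharlier_moment q x n (q * t) - q * qcharlier_moment q x n (q\<^sup>2 * t))"
proof -
  let ?F = "\<lambda>j. qcharlier q x j (Suc n)" and ?G = "\<lambda>j. qcharlier q x j n"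
  let ?h = "\<lambda>j. q ^ j * (1 - q ^ j) * (q ^ n / x)\<^sup>2 * ?G (j - 1) ^ 2"
  have "\<bar>q * t\<bar> < 1"
    using assms by (rule abs_q_mult_less_1)
  have "(\<lambda>j. (?G j - ?F j)\<^sup>2) = (\<lambda>j. ?G j ^ 2 - 2 * (?F j * ?G j) + ?F j ^ 2)"
    by (simp add: power2_eq_square algebra_simps)
  with \<open>\<bar>q * t\<bar> < 1\<close> have "qcharlier_moment q x n (q * t) - 2 * qexp_wsum q (q * t) (\<lambda>j. ?F j * ?G j) +
      qcharlier_moment q x (Suc n) (q * t) = qexp_wsum q (q * t) (\<lambda>j. (?G j - ?F j)\<^sup>2)"
    by (simp add: qexp_wsum_add qexp_wsum_diff qexp_wsum_cmult qcharlier_moment_def)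
  also have "\<dots> = qexp_wsum q t (\<lambda>j. (1 - q ^ j) * ?h j)"
  proof -
    have "(\<lambda>j. q ^ j * (?G j - ?F j)\<^sup>2) = (\<lambda>j. (1 - q ^ j) * ?h j)"
      unfolding qcharlier_diff_Suc_right power2_eq_square by (simp add: field_simps)
    then show ?thesis
      unfolding qexp_wsum_power_mult[symmetric] by simp
  qed
  also have "\<dots> = t * qexp_wsum q t (\<lambda>j. ?h (Suc j))"
    using assms by (intro qexp_wsum_shift) simp_all
  also have "(\<lambda>j. ?h (Suc j)) = (\<lambda>j. q * (q ^ n / x)\<^sup>2 * (q ^ j * ?G j ^ 2 - q * (q ^ j * (q ^ j * ?G j ^ 2))))"
    by (simp add: algebra_simps)
  also have "t * qexp_wsum q t (\<lambda>j. q * (q ^ n / x)\<^sup>2 * (q ^ j * ?G j ^ 2 - q * (q ^ j * (q ^ j * ?G j ^ 2)))) =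
      t * (q * (q ^ n / x)\<^sup>2 * qexp_wsum q t (\<lambda>j. q ^ j * ?G j ^ 2 - q * (q ^ j * (q ^ j * ?G j ^ 2))))"
    using assms by (subst qexp_wsum_cmult) simp_all
  also have "\<dots> = t * q * (q ^ n / x)\<^sup>2 * (qcharlier_moment q x n (q * t) - q * qcharlier_moment q x n (q\<^sup>2 * t))"
    using assms by (simp add: qexp_wsum_cmult qexp_wsum_diff qexp_wsum_power_mult qcharlier_moment_def
        power2_eq_square mult.assoc)
  finally show ?thesis .
qed

lemma abs_div_q_power_less_1: "x < q ^ m \<Longrightarrow> \<bar>x / q ^ m\<bar> < 1"
  using x_pos by (simp add: abs_of_pos del: power_Suc)

lemma qcharlier_moment_step_q:
  assumes "x < q ^ Suc n"
  shows "qcharlier_moment q x (Suc n) (q * x / q ^ Suc n) =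
    (1 - q ^ Suc n) / x * qcharlier_moment q x n (q * x / q ^ n)"
proof -
  define t Q where "t = x / q ^ Suc n" and "Q = q ^ Suc n"
  define a0 a1 g P where "a0 = qcharlier_moment q x (Suc n) t"
    and "a1 = qcharlier_moment q x (Suc n) (q * t)" and "g = qcharlier_moment q x n (q\<^sup>2 * t)"
    and "P = qexp_wsum q t (\<lambda>j. qcharlier q x j (Suc n) * qcharlier q x (Suc j) (Suc n))"
  \<comment> \<open>At this point \<open>Q t = x\<close>: the cross moment \<open>P\<close> enters the two relations with the
    coefficients \<open>2 t\<close> and \<open>2 x = Q \<cdot> 2 t\<close>, so it can be eliminated.\<close>
  have t: "\<bar>t\<bar> < 1" "Q * t = x"
    using abs_div_q_power_less_1[OF assms] by (simp_all add: t_def Q_def del: power_Suc)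
  have cross: "2 * x * P = (Q + x) * a0 - a1"
    using qcharlier_cross_moment[OF t(1), of "Suc n"] t(2) by (simp add: a0_def a1_def P_def Q_def)
  have contiguous: "(1 + t) * a0 - a1 - 2 * t * P = t * ((1 - Q) / x)\<^sup>2 * g"
    using qcharlier_moment_contiguous[OF t(1), of n] by (simp add: a0_def a1_def g_def P_def Q_def)
  have "(1 - Q) * a1 = Q * ((1 + t) * a0 - a1 - 2 * t * P) - ((Q + x) * a0 - a1 - 2 * x * P)"
    unfolding t(2)[symmetric] by (simp add: algebra_simps)
  also have "\<dots> = (Q * t) * ((1 - Q) / x)\<^sup>2 * g"
    unfolding contiguous cross by (simp add: ac_simps)
  also have "\<dots> = (1 - Q) * ((1 - Q) / x * g)"
    unfolding t(2) by (simp add: power2_eq_square)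
  finally have "a1 = (1 - Q) / x * g"
    by (rule mult_left_cancel[THEN iffD1, rotated]) (simp add: Q_def)
  then show ?thesis
    by (simp add: a1_def g_def t_def Q_def power2_eq_square)
qed

lemma qcharlier_moment_step:
  assumes "x < q ^ Suc n"
  shows "(q ^ Suc n - x) * qcharlier_moment q x (Suc n) (x / q ^ Suc n) =
    (1 - q ^ Suc n) * (q ^ n - x) / x * qcharlier_moment q x n (x / q ^ n)"
proof -
  define t Q R where "t = x / q ^ Suc n" and "Q = q ^ Suc n" and "R = q ^ n"
  define a0 a1 g0 b where "a0 = qcharlier_moment q x (Suc n) t"
    and "a1 = qcharlier_moment q x (Suc n) (q * t)" and "g0 = qcharlier_moment q x n (q * t)"
    and "b = qcharlier_moment q x n (q\<^sup>2 * t)"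
  define P Z where "P = qexp_wsum q t (\<lambda>j. qcharlier q x j (Suc n) * qcharlier q x (Suc j) (Suc n))"
    and "Z = qexp_wsum q (q * t) (\<lambda>j. qcharlier q x j (Suc n) * qcharlier q x j n)"
  have t: "\<bar>t\<bar> < 1" "Q * t = x"
    using abs_div_q_power_less_1[OF assms] by (simp_all add: t_def Q_def del: power_Suc)
  have QR: "Q = q * R" "q * t * R = x"
    by (simp_all add: t_def Q_def R_def)
  have cross: "2 * x * P = (Q + x) * a0 - a1"
    using qcharlier_cross_moment[OF t(1), of "Suc n"] t(2) by (simp add: a0_def a1_def P_def Q_def)
  have "Z = x / (1 - Q) * (a0 - P)"
    using qcharlier_mixed_moment[OF t(1), of n] by (simp add: Z_def a0_def P_def Q_def)
  then have mixed: "(1 - Q) * Z = x * (a0 - P)"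
    by (simp add: Q_def)
  have "g0 - 2 * Z + a1 = t * q * (R / x)\<^sup>2 * (g0 - q * b)"
    using qcharlier_mixed_moment_square[OF t(1), of n] by (simp add: Z_def a1_def g0_def b_def R_def)
  also have "t * q * (R / x)\<^sup>2 = R / x"
    by (simp add: t_def R_def power2_eq_square field_simps)
  finally have square: "x * (g0 - 2 * Z + a1) = R * g0 - Q * b"
    using QR(1) by (simp add: field_simps)
  have "a1 = (1 - Q) / x * b"
    using qcharlier_moment_step_q[OF assms] by (simp add: a1_def b_def t_def Q_def power2_eq_square)
  then have step_q: "x * a1 = (1 - Q) * b"
    by simp
  have "x * ((Q - x) * a0) = (1 - Q) * (R - x) * g0"
    using cross mixed square step_q QR(1) by algebra
  then have "(Q - x) * a0 = (1 - Q) * (R - x) / x * g0"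
    by (simp add: field_simps mult.commute)
  then show ?thesis
    by (simp add: a0_def g0_def t_def Q_def R_def)
qed

lemma qcharlier_moment_step_q2:
  assumes "x < q ^ Suc n"
  shows "(2 - (1 + q) * q ^ n) * qcharlier_moment q x (Suc n) (q\<^sup>2 * x / q ^ Suc n) =
    (1 + q) * (1 - q ^ Suc n)\<^sup>2 / x * qcharlier_moment q x n (q\<^sup>2 * x / q ^ n) -
    (1 - q) * (q ^ n - x) * qcharlier_moment q x (Suc n) (q * x / q ^ Suc n)"
proof -
  define t Q R where "t = x / q ^ n" and "Q = q ^ Suc n" and "R = q ^ n"
  define a0 a1 g P where "a0 = qcharlier_moment q x (Suc n) t"
    and "a1 = qcharlier_moment q x (Suc n) (q * t)" and "g = qcharlier_moment q x n (q\<^sup>2 * t)"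
    and "P = qexp_wsum q t (\<lambda>j. qcharlier q x j (Suc n) * qcharlier q x (Suc j) (Suc n))"
  have t: "\<bar>t\<bar> < 1"
    unfolding t_def using less_q_power_Suc_imp_less[OF assms] by (rule abs_div_q_power_less_1)
  have QR: "Q = q * R" "R * t = x"
    by (simp_all add: t_def Q_def R_def)
  have cross: "(x + Q * t) * P = (Q + x) * a0 - a1"
    using qcharlier_cross_moment[OF t, of "Suc n"] by (simp add: a0_def a1_def P_def Q_def)
  have "(1 + t) * a0 - a1 - 2 * t * P = t * ((1 - Q) / x)\<^sup>2 * g"
    using qcharlier_moment_contiguous[OF t, of n] by (simp add: a0_def a1_def g_def P_def Q_def)
  then have contiguous: "x\<^sup>2 * ((1 + t) * a0 - a1 - 2 * t * P) = t * (1 - Q)\<^sup>2 * g"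
    by (simp add: power_divide)
  have "x * (x * ((2 - (1 + q) * R) * a1)) = x * ((1 + q) * (1 - Q)\<^sup>2 * g - x * ((1 - q) * (R - x) * a0))"
    using cross contiguous QR by algebra
  then have "x * ((2 - (1 + q) * R) * a1) = (1 + q) * (1 - Q)\<^sup>2 * g - x * ((1 - q) * (R - x) * a0)"
    by (simp only: mult_cancel_left x_nonzero simp_thms)
  then have "(2 - (1 + q) * R) * a1 = (1 + q) * (1 - Q)\<^sup>2 / x * g - (1 - q) * (R - x) * a0"
    by (simp add: field_simps mult.commute)
  then show ?thesis
    by (simp add: a0_def a1_def g_def t_def Q_def R_def power2_eq_square)
qed

lemma qcharlier_moment_q_eq:
  "x < q ^ m \<Longrightarrow> qcharlier_moment q x m (q * x / q ^ m) = qpoch q q m / x ^ m * (1 - x) * qexp q x"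
proof (induction m)
  case 0
  then show ?case
    using x_pos by (simp add: qexp_q_mult)
next
  case (Suc n)
  have "qcharlier_moment q x (Suc n) (q * x / q ^ Suc n) =
      (1 - q ^ Suc n) / x * qcharlier_moment q x n (q * x / q ^ n)"
    using Suc.prems by (rule qcharlier_moment_step_q)
  also have "\<dots> = (1 - q ^ Suc n) / x * (qpoch q q n / x ^ n * (1 - x) * qexp q x)"
    using Suc less_q_power_Suc_imp_less by simp
  also have "\<dots> = qpoch q q (Suc n) / x ^ Suc n * (1 - x) * qexp q x"
    by (simp add: qpoch_Suc_q field_simps)
  finally show ?case .
qed

lemma qcharlier_moment_eq:
  "x < q ^ m \<Longrightarrow>
    qcharlier_moment q x m (x / q ^ m) = qpoch q q m / x ^ m * (1 - x) / (q ^ m - x) * qexp q x"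
proof (induction m)
  case 0
  then show ?case
    by simp
next
  case (Suc n)
  have "(q ^ Suc n - x) * qcharlier_moment q x (Suc n) (x / q ^ Suc n) =
      (1 - q ^ Suc n) * (q ^ n - x) / x * qcharlier_moment q x n (x / q ^ n)"
    using Suc.prems by (rule qcharlier_moment_step)
  also have "\<dots> = (1 - q ^ Suc n) * (q ^ n - x) / x * (qpoch q q n / x ^ n * (1 - x) / (q ^ n - x) * qexp q x)"
    using Suc less_q_power_Suc_imp_less by simp
  also have "\<dots> = (q ^ Suc n - x) * (qpoch q q (Suc n) / x ^ Suc n * (1 - x) / (q ^ Suc n - x) * qexp q x)"
    using Suc.prems less_q_power_Suc_imp_less[OF Suc.prems] by (simp add: qpoch_Suc_q field_simps)
  finally have "(q ^ Suc n - x) * qcharlier_moment q x (Suc n) (x / q ^ Suc n) =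
      (q ^ Suc n - x) * (qpoch q q (Suc n) / x ^ Suc n * (1 - x) / (q ^ Suc n - x) * qexp q x)" .
  moreover have "q ^ Suc n - x \<noteq> 0"
    using Suc.prems by simp
  ultimately show ?case
    by (simp only: mult_cancel_left simp_thms)
qed

lemma qcharlier_moment_q2_eq:
  "x < q ^ m \<Longrightarrow> qcharlier_moment q x m (q\<^sup>2 * x / q ^ m) =
    qpoch q q m / x ^ m * (1 - x) * (q ^ m + x - (1 + q) * q ^ m * x) * qexp q x"
proof (induction m)
  case 0
  have "\<bar>q * x\<bar> < 1" "\<bar>x\<bar> < 1"
    using 0 x_pos abs_q_mult_less_1[of x] by simp_all
  then show ?case
    using qexp_q_mult[of "q * x"] qexp_q_mult[of x] by (simp add: power2_eq_square algebra_simps)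
next
  case (Suc n)
  define K R where "K = qpoch q q n / x ^ n * (1 - x) * qexp q x" and "R = q ^ n"
  have moment_n: "qcharlier_moment q x n (q\<^sup>2 * x / q ^ n) = K * (R + x - (1 + q) * R * x)"
    using Suc less_q_power_Suc_imp_less by (simp add: K_def R_def)
  have moment_q: "qcharlier_moment q x (Suc n) (q * x / q ^ Suc n) = K * (1 - q * R) / x"
    using qcharlier_moment_q_eq[OF Suc.prems] by (simp add: K_def R_def qpoch_Suc_q field_simps)
  have "(2 - (1 + q) * R) * qcharlier_moment q x (Suc n) (q\<^sup>2 * x / q ^ Suc n) =
      (1 + q) * (1 - q * R)\<^sup>2 / x * qcharlier_moment q x n (q\<^sup>2 * x / q ^ n) -
      (1 - q) * (R - x) * qcharlier_moment q x (Suc n) (q * x / q ^ Suc n)"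
    using qcharlier_moment_step_q2[OF Suc.prems] by (simp add: R_def)
  also have "\<dots> = (1 + q) * (1 - q * R)\<^sup>2 / x * (K * (R + x - (1 + q) * R * x)) -
      (1 - q) * (R - x) * (K * (1 - q * R) / x)"
    unfolding moment_n moment_q by (simp only:)
  also have "\<dots> = K * (1 - q * R) / x * ((1 + q) * (1 - q * R) * (R + x - (1 + q) * R * x) - (1 - q) * (R - x))"
    by (simp add: power2_eq_square field_simps)
  also have "(1 + q) * (1 - q * R) * (R + x - (1 + q) * R * x) - (1 - q) * (R - x) =
      (2 - (1 + q) * R) * (q * R + x - (1 + q) * (q * R) * x)"
    by (simp add: algebra_simps)
  also have "K * (1 - q * R) / x * \<dots> =
      (2 - (1 + q) * R) * (qpoch q q (Suc n) / x ^ Suc n * (1 - x) *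
        (q ^ Suc n + x - (1 + q) * q ^ Suc n * x) * qexp q x)"
    by (simp add: K_def R_def qpoch_Suc_q field_simps)
  finally show ?case
    using two_minus_q_power_pos[of n] unfolding R_def by (metis mult_cancel_left order_less_irrefl)
qed

end

section \<open>Moments of the generalized Euler distribution\<close>

lemma qnum_variance_identity:
  fixes q Q x :: real
  assumes "q \<noteq> 1" "Q \<noteq> 0"
  shows "((Q - x) / (1 - q))\<^sup>2 * 1 - 2 * ((Q - x) / (1 - q)) * (1 / (1 - q)) * (Q - x) +
      (1 / (1 - q))\<^sup>2 * ((Q - x) * (Q + x - (1 + q) * Q * x)) =
    (x / (1 - q))\<^sup>2 * Q * (1 + q - 2 * inverse Q) + x / (1 - q) * Q * (2 * ((1 - Q) / (1 - q)) + Q)"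
proof -
  define d where "d = 1 - q"
  have "d \<noteq> 0"
    using assms(1) by (simp add: d_def)
  then show ?thesis
    unfolding d_def[symmetric] using assms(2) by (simp add: field_simps) (use d_def in algebra)
qed

context q_charlier
begin

lemma qcharlier_max_min: "qcharlier q x (max m j) (min m j) = qcharlier q x j m"
  by (cases "m \<le> j") (simp_all add: max_def min_def qcharlier_commute)

lemma gen_euler_pmf_eq_qcharlier:
  assumes "(1 - q) * lam = x"
  shows "gen_euler_pmf q m lam j = x ^ (j + m) * qcharlier q x j m ^ 2 /
    (gen_euler_norm q m lam * q ^ (m * j) * qpoch q q j * qpoch q q m)"
proof -
  define a b where "a = min m j" and "b = max m j"
  define D where "D = gen_euler_norm q m lam * q ^ (m * j) * qpoch q q j * qpoch q q m"
  have wall: "qpoch q q b / qpoch q q (b - a) * wall_poly a x (q ^ (b - a)) q =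
      (-1) ^ a * x ^ a / q ^ tri a * qcharlier q x j m"
    using wall_poly_eq_qcharlier[of a b] qcharlier_max_min[of m j] by (simp add: a_def b_def)
  have "gen_euler_pmf q m lam j = q ^ (2 * tri a) * x ^ (b - a) / D *
      ((-1) ^ a * x ^ a / q ^ tri a * qcharlier q x j m)\<^sup>2"
    unfolding gen_euler_pmf_def Let_def a_def[symmetric] b_def[symmetric] assms wall tri_eq D_def
    by (simp add: mult.assoc flip: assms power_mult_distrib)
  also have "\<dots> = x ^ (b - a + 2 * a) * qcharlier q x j m ^ 2 / D"
    by (simp add: power_mult_distrib power_divide power_add power_mult[symmetric] mult.commute[of 2])
  also have "b - a + 2 * a = j + m"
    by (simp add: a_def b_def)
  finally show ?thesis
    unfolding D_def .
qed

lemma gen_euler_norm_eq: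
  assumes "(1 - q) * lam = x" "x < q ^ m"
  shows "gen_euler_norm q m lam = (1 - x) * qexp q x / (q ^ m - x)"
proof -
  define y where "y = x / q ^ m"
  have y: "0 \<le> y" "y < 1" "y * q ^ m = x"
    using x_pos assms(2) by (simp_all add: y_def)
  have arg: "inverse (q ^ m) * (1 - q) * lam = y"
    using assms(1) by (simp add: y_def divide_inverse mult.assoc mult.commute)
  have arg_q: "q * inverse (q ^ m) * (1 - q) * lam = q * y"
    using arg by (simp add: mult.assoc)
  have "gen_euler_norm q m lam = qpoch (q * y) q m * qexp q y / q ^ m"
    unfolding gen_euler_norm_def arg arg_q qpoch_inf_eq_inverse_qexp[OF y(1,2)]
    using qexp_ge_1[OF y(1,2)] by simp
  also have "qpoch (q * y) q m = qpoch y q m * (1 - x) / (1 - y)"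
    using qpoch_mult_q[of q y m, unfolded y(3)] y(2) by (simp add: field_simps)
  also have "qpoch y q m * (1 - x) / (1 - y) * qexp q y / q ^ m = (1 - x) * qexp q x / (q ^ m * (1 - y))"
    using qexp_q_power_mult[of y m] y by (simp add: field_simps)
  also have "q ^ m * (1 - y) = q ^ m - x"
    using y(3) by (simp add: algebra_simps)
  finally show ?thesis .
qed

lemma gen_euler_pmf_eq_qexp_weight:
  assumes "(1 - q) * lam = x" "x < q ^ m"
  shows "gen_euler_pmf q m lam j = (q ^ m - x) * x ^ m / ((1 - x) * qexp q x * qpoch q q m) *
    (qexp_weight q (x / q ^ m) j * qcharlier q x j m ^ 2)"
proof -
  have "x < 1"
    using assms(2) q_power_le_1[of m] by linarith
  then have "x \<noteq> 1" "qexp q x \<noteq> 0"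
    using qexp_ge_1[of x] x_pos by auto
  then show ?thesis
    using assms by (simp add: gen_euler_pmf_eq_qcharlier gen_euler_norm_eq qexp_weight_def
        power_add power_divide field_simps flip: power_mult)
qed

lemma gen_euler_pmf_q_power_sums:
  assumes "(1 - q) * lam = x" "x < q ^ m"
  shows "(\<lambda>j. (q ^ j) ^ k * gen_euler_pmf q m lam j) sums
    ((q ^ m - x) * x ^ m / ((1 - x) * qexp q x * qpoch q q m) * qcharlier_moment q x m (q ^ k * (x / q ^ m)))"
proof -
  define c t where "c = (q ^ m - x) * x ^ m / ((1 - x) * qexp q x * qpoch q q m)" and "t = x / q ^ m"
  have t: "\<bar>t\<bar> < 1"
    unfolding t_def using assms(2) by (rule abs_div_q_power_less_1)
  have "Bseq (\<lambda>j. (q ^ k) ^ j)"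
    using q_power_le_1[of k] by (intro Bseq_realpow) simp_all
  then have "(\<lambda>j. qexp_weight q t j * (c * ((q ^ k) ^ j * qcharlier q x j m ^ 2))) sums
      qexp_wsum q t (\<lambda>j. c * ((q ^ k) ^ j * qcharlier q x j m ^ 2))"
    using t by (intro qexp_wsum_sums) simp_all
  also have "qexp_wsum q t (\<lambda>j. c * ((q ^ k) ^ j * qcharlier q x j m ^ 2)) =
      c * qcharlier_moment q x m (q ^ k * t)"
    using t \<open>Bseq (\<lambda>j. (q ^ k) ^ j)\<close>
    by (simp add: qexp_wsum_cmult qcharlier_moment_def qexp_wsum_power_mult)
  also have "(\<lambda>j. qexp_weight q t j * (c * ((q ^ k) ^ j * qcharlier q x j m ^ 2))) =
      (\<lambda>j. (q ^ j) ^ k * gen_euler_pmf q m lam j)"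
    unfolding gen_euler_pmf_eq_qexp_weight[OF assms] c_def t_def
    by (simp add: fun_eq_iff ac_simps flip: power_mult)
  finally show ?thesis
    unfolding c_def t_def .
qed

lemma gen_euler_pmf_sums:
  assumes "(1 - q) * lam = x" "x < q ^ m"
  shows "gen_euler_pmf q m lam sums 1"
    and "(\<lambda>j. q ^ j * gen_euler_pmf q m lam j) sums (q ^ m - x)"
    and "(\<lambda>j. (q ^ j)\<^sup>2 * gen_euler_pmf q m lam j) sums ((q ^ m - x) * (q ^ m + x - (1 + q) * q ^ m * x))"
proof -
  have "x < 1"
    using assms(2) q_power_le_1[of m] by linarith
  then have nonzero: "x \<noteq> 1" "qexp q x \<noteq> 0"
    using qexp_ge_1[of x] x_pos by auto
  show "gen_euler_pmf q m lam sums 1"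
    using gen_euler_pmf_q_power_sums[OF assms, of 0] qcharlier_moment_eq[OF assms(2)] assms(2) nonzero
    by simp
  show "(\<lambda>j. q ^ j * gen_euler_pmf q m lam j) sums (q ^ m - x)"
    using gen_euler_pmf_q_power_sums[OF assms, of 1] qcharlier_moment_q_eq[OF assms(2)] assms(2) nonzero
    by simp
  show "(\<lambda>j. (q ^ j)\<^sup>2 * gen_euler_pmf q m lam j) sums ((q ^ m - x) * (q ^ m + x - (1 + q) * q ^ m * x))"
    using gen_euler_pmf_q_power_sums[OF assms, of 2] qcharlier_moment_q2_eq[OF assms(2)] assms(2) nonzero
    by simp
qed

lemma gen_euler_qnum_mean:
  assumes "(1 - q) * lam = x" "x < q ^ m"
  shows "(\<lambda>j. qnum q j * gen_euler_pmf q m lam j) sums (lam + qnum q m)"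
proof -
  let ?p = "gen_euler_pmf q m lam"
  have "(\<lambda>j. (?p j - q ^ j * ?p j) / (1 - q)) sums ((1 - (q ^ m - x)) / (1 - q))"
    using gen_euler_pmf_sums[OF assms] by (intro sums_divide sums_diff)
  moreover have "(\<lambda>j. (?p j - q ^ j * ?p j) / (1 - q)) = (\<lambda>j. qnum q j * ?p j)"
    using q_less_1 by (simp add: qnum_def fun_eq_iff field_simps)
  moreover have "(1 - (q ^ m - x)) / (1 - q) = lam + qnum q m"
    unfolding assms(1)[symmetric] using q_less_1 by (simp add: qnum_def field_simps)
  ultimately show ?thesis
    by simp
qed

lemma gen_euler_qnum_variance:
  assumes "(1 - q) * lam = x" "x < q ^ m"
  shows "(\<lambda>j. (qnum q j - (lam + qnum q m))\<^sup>2 * gen_euler_pmf q m lam j) sums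
    (lam\<^sup>2 * q ^ m * (1 + q - 2 * inverse (q ^ m)) + lam * q ^ m * (2 * qnum q m + q ^ m))"
proof -
  let ?p = "gen_euler_pmf q m lam"
  define a b where "a = (q ^ m - x) / (1 - q)" and "b = 1 / (1 - q)"
  have lam: "lam = x / (1 - q)"
    using assms(1) q_less_1 by (simp add: field_simps)
  have "(\<lambda>j. a\<^sup>2 * ?p j - 2 * a * b * (q ^ j * ?p j) + b\<^sup>2 * ((q ^ j)\<^sup>2 * ?p j)) sums
      (a\<^sup>2 * 1 - 2 * a * b * (q ^ m - x) + b\<^sup>2 * ((q ^ m - x) * (q ^ m + x - (1 + q) * q ^ m * x)))"
    using gen_euler_pmf_sums[OF assms] by (intro sums_add sums_diff sums_mult)
  moreover have "(\<lambda>j. a\<^sup>2 * ?p j - 2 * a * b * (q ^ j * ?p j) + b\<^sup>2 * ((q ^ j)\<^sup>2 * ?p j)) =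
      (\<lambda>j. (qnum q j - (lam + qnum q m))\<^sup>2 * ?p j)"
  proof
    fix j
    have deviation: "qnum q j - (lam + qnum q m) = a - b * q ^ j"
      by (simp add: qnum_def a_def b_def lam diff_divide_distrib add_divide_distrib)
    show "a\<^sup>2 * ?p j - 2 * a * b * (q ^ j * ?p j) + b\<^sup>2 * ((q ^ j)\<^sup>2 * ?p j) =
        (qnum q j - (lam + qnum q m))\<^sup>2 * ?p j"
      unfolding deviation by (simp add: power2_eq_square algebra_simps)
  qed
  moreover have "a\<^sup>2 * 1 - 2 * a * b * (q ^ m - x) + b\<^sup>2 * ((q ^ m - x) * (q ^ m + x - (1 + q) * q ^ m * x)) =
      lam\<^sup>2 * q ^ m * (1 + q - 2 * inverse (q ^ m)) + lam * q ^ m * (2 * qnum q m + q ^ m)"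
    unfolding a_def b_def qnum_def lam using q_less_1 by (intro qnum_variance_identity) simp_all
  ultimately show ?thesis
    by simp
qed

end

theorem proposition5p1:
  fixes q lam :: real and m :: nat
  assumes "0 < q" and "q < 1"
    and "0 < lam" and "lam < q ^ m / (1 - q)"
  shows "((\<lambda>j. qnum q j * gen_euler_pmf q m lam j) sums (lam + qnum q m)) \<and>
         ((\<lambda>j. (qnum q j - (lam + qnum q m))\<^sup>2 * gen_euler_pmf q m lam j) sums
           (lam\<^sup>2 * q ^ m * (1 + q - 2 * inverse (q ^ m)) + lam * q ^ m * (2 * qnum q m + q ^ m)))"
proof -
  define x where "x = (1 - q) * lam"
  interpret q_charlier q x
    using assms by unfold_locales (simp_all add: x_def)
  have "(1 - q) * lam = x" "x < q ^ m"
    using assms by (simp_all add: x_def field_simps)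
  then show ?thesis
    using gen_euler_qnum_mean gen_euler_qnum_variance by blast
qed

end
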